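(* Let $X$ be a finite, connected geometric simplicial complex with vertex set $V$, let $q\in[1,\infty)$, and let $f,g: X\to\mathbb{R}$ be functions each obtained from a function on $V$ by extending linearly over the simplices of $X$. Let $p$ be the uniform probability distribution on $V$. Then \[ d^{GW}_q(G_f,G_g) \leq \tfrac{1}{2}\, |V|^{1/q}\, \|f-g\|_{L^q(p)}. \]
   Context: Merge tree: for $f: X\to\mathbb{R}$, declare $x\sim y$ if $f(x)=f(y)=a$ and $x,y$ lie in the same connected component of $f^{-1}(-\infty,a]$; the merge tree is $T_f = X/\!\sim$, with $f$ descending to $T_f$. Let $\pi_f: V\to T_f$ be the restriction of the quotient map to $V$. The LCA matrix $W_f(v,w)$ is the maximum value of $f$ along the unique geodesic path from $\pi_f(v)$ to $\pi_f(w)$ in $T_f$. The measure network is $G_f=(V,p,W_f)$. $\|h\|_{L^q(p)} = (\sum_{v\in V}|h(v)|^q p(v))^{1/q}$. For finite measure networks $G_i=(V_i,p_i,W_i)$, with $\mathcal{C}(p_1,p_2)$ the nonnegative matrices with row sums $p_1$ and column sums $p_2$, $d^{GW}_q(G_1,G_2) = \tfrac12 \min_{C\in\mathcal{C}(p_1,p_2)} (\sum_{i,j,k,l} |W_1(i,k)-W_2(j,l)|^q C_{i,j}C_{k,l})^{1/q}$. *)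

theory Defs
  imports "HOL-Analysis.Analysis"
begin

text \<open>Geometric simplicial complexes are the library's \<open>simplicial_complex\<close>
  (finite set of simplices in a Euclidean space, closed under faces, intersecting in faces).\<close>

definition cplx_space :: "'a::euclidean_space set set \<Rightarrow> 'a set" where
  "cplx_space \<C> = \<Union>\<C>"

definition cplx_vertices :: "'a::euclidean_space set set \<Rightarrow> 'a set" where
  "cplx_vertices \<C> = {v. {v} \<in> \<C>}"

text \<open>A function obtained from a function on the vertices by extending linearly over
  each simplex: on every simplex it agrees with an affine function.\<close>

definition piecewise_linear_on :: "'a::euclidean_space set set \<Rightarrow> ('a \<Rightarrow> real) \<Rightarrow> bool" where
  "piecewise_linear_on \<C> f \<longleftrightarrow> (\<forall>S\<in>\<C>. \<exists>a b. \<forall>x\<in>S. f x = inner a x + b)"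

text \<open>LCA matrix of the merge tree: the f-value of the lowest common ancestor of
  the images of v and w in the merge tree, i.e. the lowest level a such that v and w lie
  in a common connected component of the sublevel set of f restricted to X at level a.\<close>

definition merge_lca :: "'a::topological_space set \<Rightarrow> ('a \<Rightarrow> real) \<Rightarrow> 'a \<Rightarrow> 'a \<Rightarrow> real" where
  "merge_lca X f v w =
     Inf {a. \<exists>C. connected C \<and> C \<subseteq> {x\<in>X. f x \<le> a} \<and> v \<in> C \<and> w \<in> C}"

definition couplings :: "'a set \<Rightarrow> ('a \<Rightarrow> real) \<Rightarrow> 'b set \<Rightarrow> ('b \<Rightarrow> real) \<Rightarrow> ('a \<Rightarrow> 'b \<Rightarrow> real) set" where
  "couplings V1 p1 V2 p2 =
     {C. (\<forall>i j. 0 \<le> C i j) \<and> (\<forall>i j. i \<notin> V1 \<or> j \<notin> V2 \<longrightarrow> C i j = 0) \<and>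
         (\<forall>i\<in>V1. (\<Sum>j\<in>V2. C i j) = p1 i) \<and> (\<forall>j\<in>V2. (\<Sum>i\<in>V1. C i j) = p2 j)}"

definition gw_dist :: "real \<Rightarrow> 'a set \<Rightarrow> ('a \<Rightarrow> real) \<Rightarrow> ('a \<Rightarrow> 'a \<Rightarrow> real)
                      \<Rightarrow> 'b set \<Rightarrow> ('b \<Rightarrow> real) \<Rightarrow> ('b \<Rightarrow> 'b \<Rightarrow> real) \<Rightarrow> real" where
  "gw_dist q V1 p1 W1 V2 p2 W2 =
     1/2 * Inf ((\<lambda>C. (\<Sum>i\<in>V1. \<Sum>j\<in>V2. \<Sum>k\<in>V1. \<Sum>l\<in>V2.
                        \<bar>W1 i k - W2 j l\<bar> powr q * C i j * C k l) powr (1/q))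
                ` couplings V1 p1 V2 p2)"

definition Lq_norm :: "real \<Rightarrow> 'a set \<Rightarrow> ('a \<Rightarrow> real) \<Rightarrow> ('a \<Rightarrow> real) \<Rightarrow> real" where
  "Lq_norm q V p h = (\<Sum>v\<in>V. \<bar>h v\<bar> powr q * p v) powr (1/q)"

end

theory Submission
  imports Defs
begin

text \<open>Couple every vertex with itself. Under this diagonal coupling the Gromov-Wasserstein
  cost only compares \<open>W\<^sub>f(v,w)\<close> with \<open>W\<^sub>g(v,w)\<close>, and these differ by at most
  \<open>\<parallel>f - g\<parallel>\<^sub>\<infinity>\<close>: lowering every sublevel set of \<open>g\<close> by that amount puts it
  inside the corresponding sublevel set of \<open>f\<close>. Since \<open>f - g\<close> is itself linear on
  simplices, its supremum is attained at a vertex and is therefore at most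
  \<open>(\<Sum>\<^sub>v |f v - g v|\<^sup>q)\<^sup>1\<^sup>/\<^sup>q = |V|\<^sup>1\<^sup>/\<^sup>q \<parallel>f - g\<parallel>\<^sub>L\<^sub>q\<^sub>(\<^sub>p\<^sub>)\<close>.\<close>

lemma merge_lca_le_shift:
  assumes le: "\<forall>x\<in>X. f x \<le> g x + M"
    and ex: "\<exists>a C. connected C \<and> C \<subseteq> {x\<in>X. g x \<le> a} \<and> v \<in> C \<and> w \<in> C"
  shows "merge_lca X f v w \<le> merge_lca X g v w + M"
proof -
  define Sf where "Sf = {a. \<exists>C. connected C \<and> C \<subseteq> {x\<in>X. f x \<le> a} \<and> v \<in> C \<and> w \<in> C}"
  define Sg where "Sg = {a. \<exists>C. connected C \<and> C \<subseteq> {x\<in>X. g x \<le> a} \<and> v \<in> C \<and> w \<in> C}"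
  have bdd: "bdd_below Sf"
    unfolding Sf_def bdd_below_def by (rule exI[of _ "f v"]) auto
  have "Sg \<noteq> {}" using ex unfolding Sg_def by auto
  moreover have "a + M \<in> Sf" if "a \<in> Sg" for a
  proof -
    from that obtain C where C: "connected C" "C \<subseteq> {x\<in>X. g x \<le> a}" "v \<in> C" "w \<in> C"
      unfolding Sg_def by auto
    then have "C \<subseteq> {x\<in>X. f x \<le> a + M}" using le by force
    then show ?thesis unfolding Sf_def using C by auto
  qed
  ultimately have "Inf Sf - M \<le> Inf Sg"
    by (intro cInf_greatest) (auto simp: algebra_simps intro: cInf_lower[OF _ bdd])
  then show ?thesis unfolding merge_lca_def Sf_def Sg_def by simp
qed

lemma abs_merge_lca_diff_le:
  assumes X: "connected X" and vw: "v \<in> X" "w \<in> X"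
    and bdd: "bdd_above (f ` X)" "bdd_above (g ` X)"
    and M: "\<forall>x\<in>X. \<bar>f x - g x\<bar> \<le> M"
  shows "\<bar>merge_lca X f v w - merge_lca X g v w\<bar> \<le> M"
proof -
  have level_exists: "\<exists>a C. connected C \<and> C \<subseteq> {x\<in>X. h x \<le> a} \<and> v \<in> C \<and> w \<in> C"
    if "bdd_above (h ` X)" for h :: "_ \<Rightarrow> real"
  proof -
    have "\<exists>a. \<forall>x\<in>X. h x \<le> a" using that by (simp add: bdd_above_def)
    then obtain a where "\<forall>x\<in>X. h x \<le> a" ..
    then have "connected X \<and> X \<subseteq> {x\<in>X. h x \<le> a} \<and> v \<in> X \<and> w \<in> X"
      using X vw by auto
    then show ?thesis by blast
  qed
  have "\<forall>x\<in>X. f x \<le> g x + M" using M by (auto simp: abs_le_iff)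
  then have "merge_lca X f v w \<le> merge_lca X g v w + M"
    using level_exists[OF bdd(2)] by (rule merge_lca_le_shift)
  moreover have "\<forall>x\<in>X. g x \<le> f x + M" using M by (auto simp: abs_le_iff)
  then have "merge_lca X g v w \<le> merge_lca X f v w + M"
    using level_exists[OF bdd(1)] by (rule merge_lca_le_shift)
  ultimately show ?thesis by linarith
qed

lemma simplicial_complex_simplex_compact_convex:
  assumes "simplicial_complex \<C>" "S \<in> \<C>"
  shows "compact S" "convex S"
proof -
  have "\<forall>S\<in>\<C>. \<exists>n. n simplex S" using assms(1) unfolding simplicial_complex_def by simp
  then obtain n where "n simplex S" using assms(2) by blast
  then show "compact S" "convex S" by (auto intro: compact_simplex convex_simplex)
qed

lemma simplicial_complex_face_closed:
  assumes "simplicial_complex \<C>" "S \<in> \<C>" "F face_of S"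
  shows "F \<in> \<C>"
proof -
  have "\<forall>F S. S \<in> \<C> \<and> F face_of S \<longrightarrow> F \<in> \<C>" using assms(1) unfolding simplicial_complex_def by simp
  then show ?thesis using assms(2,3) by blast
qed

lemma finite_cplx_vertices:
  assumes "simplicial_complex \<C>"
  shows "finite (cplx_vertices \<C>)"
proof -
  have "(\<lambda>v. {v}) ` cplx_vertices \<C> \<subseteq> \<C>" unfolding cplx_vertices_def by auto
  moreover have "finite \<C>" using assms unfolding simplicial_complex_def by simp
  ultimately have "finite ((\<lambda>v. {v}) ` cplx_vertices \<C>)" by (rule finite_subset)
  then show ?thesis by (rule finite_imageD) (auto simp: inj_on_def)
qed

lemma cplx_vertices_subset_space: "cplx_vertices \<C> \<subseteq> cplx_space \<C>"
  unfolding cplx_vertices_def cplx_space_def by auto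

lemma piecewise_linear_onE:
  assumes "piecewise_linear_on \<C> f" "S \<in> \<C>"
  obtains a b where "\<forall>x\<in>S. f x = inner a x + b"
  using assms unfolding piecewise_linear_on_def by meson

lemma piecewise_linear_on_diff:
  assumes "piecewise_linear_on \<C> f" "piecewise_linear_on \<C> g"
  shows "piecewise_linear_on \<C> (\<lambda>x. f x - g x)"
  unfolding piecewise_linear_on_def
proof
  fix S assume "S \<in> \<C>"
  obtain a1 b1 a2 b2 where "\<forall>x\<in>S. f x = inner a1 x + b1" "\<forall>x\<in>S. g x = inner a2 x + b2"
    using piecewise_linear_onE[OF assms(1) \<open>S \<in> \<C>\<close>] piecewise_linear_onE[OF assms(2) \<open>S \<in> \<C>\<close>] by metis
  then have "\<forall>x\<in>S. f x - g x = inner (a1 - a2) x + (b1 - b2)" by (simp add: inner_diff_left)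
  then show "\<exists>a b. \<forall>x\<in>S. f x - g x = inner a x + b" by blast
qed

lemma piecewise_linear_bounded:
  assumes \<C>: "simplicial_complex \<C>" and f: "piecewise_linear_on \<C> f"
  shows "bounded (f ` cplx_space \<C>)"
proof -
  have "bounded (f ` S)" if S: "S \<in> \<C>" for S
  proof -
    obtain a b where "\<forall>x\<in>S. f x = inner a x + b" using f S by (rule piecewise_linear_onE)
    then have "f ` S = (\<lambda>x. inner a x + b) ` S" by auto
    moreover have "compact ((\<lambda>x. inner a x + b) ` S)"
      using simplicial_complex_simplex_compact_convex[OF \<C> S]
      by (intro compact_continuous_image continuous_intros) auto
    ultimately show ?thesis by (simp add: compact_imp_bounded)
  qed
  moreover have "finite \<C>" using \<C> unfolding simplicial_complex_def by simp
  ultimately show ?thesis unfolding cplx_space_def by (auto simp: image_Union intro!: bounded_UN)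
qed

lemma affine_abs_le_on_compact_convex:
  fixes S :: "'a::euclidean_space set"
  assumes "compact S" "convex S"
    and extreme: "\<And>e. e extreme_point_of S \<Longrightarrow> \<bar>inner a e + b\<bar> \<le> M"
    and "x \<in> S"
  shows "\<bar>inner a x + b\<bar> \<le> M"
proof -
  let ?T = "{y. \<bar>inner a y + b\<bar> \<le> M}"
  have "?T = {y. inner a y \<le> M - b} \<inter> {y. inner a y \<ge> - M - b}" by auto
  then have "convex ?T" by (simp add: convex_Int convex_halfspace_le convex_halfspace_ge)
  moreover have "{e. e extreme_point_of S} \<subseteq> ?T" using extreme by blast
  ultimately have "convex hull {e. e extreme_point_of S} \<subseteq> ?T" by (rule hull_minimal[rotated])
  moreover have "x \<in> convex hull {e. e extreme_point_of S}"
    using Krein_Milman_Minkowski[OF assms(1,2)] \<open>x \<in> S\<close> by (rule subst)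
  ultimately show ?thesis by blast
qed

lemma piecewise_linear_abs_le_from_vertices:
  assumes \<C>: "simplicial_complex \<C>" and h: "piecewise_linear_on \<C> h"
    and vertices: "\<forall>v\<in>cplx_vertices \<C>. \<bar>h v\<bar> \<le> M"
    and x: "x \<in> cplx_space \<C>"
  shows "\<bar>h x\<bar> \<le> M"
proof -
  obtain S where S: "S \<in> \<C>" "x \<in> S" using x unfolding cplx_space_def by auto
  obtain a b where ab: "\<forall>y\<in>S. h y = inner a y + b" using h S(1) by (rule piecewise_linear_onE)
  have "\<bar>inner a e + b\<bar> \<le> M" if e: "e extreme_point_of S" for e
  proof -
    have "{e} face_of S" using e by (simp add: face_of_singleton)
    then have "e \<in> cplx_vertices \<C>"
      using simplicial_complex_face_closed[OF \<C> S(1)] by (simp add: cplx_vertices_def)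
    moreover have "e \<in> S" using e by (simp add: extreme_point_of_def)
    ultimately show ?thesis using vertices ab by auto
  qed
  from simplicial_complex_simplex_compact_convex[OF \<C> S(1)] this S(2)
  have "\<bar>inner a x + b\<bar> \<le> M" by (rule affine_abs_le_on_compact_convex)
  then show ?thesis using ab S(2) by simp
qed

definition gw_cost :: "real \<Rightarrow> 'a set \<Rightarrow> ('a \<Rightarrow> 'a \<Rightarrow> real) \<Rightarrow> 'b set \<Rightarrow> ('b \<Rightarrow> 'b \<Rightarrow> real)
                        \<Rightarrow> ('a \<Rightarrow> 'b \<Rightarrow> real) \<Rightarrow> real" where
  "gw_cost q V1 W1 V2 W2 C =
     (\<Sum>i\<in>V1. \<Sum>j\<in>V2. \<Sum>k\<in>V1. \<Sum>l\<in>V2. \<bar>W1 i k - W2 j l\<bar> powr q * C i j * C k l) powr (1/q)"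

lemma gw_dist_le_gw_cost:
  assumes "C \<in> couplings V1 p1 V2 p2"
  shows "gw_dist q V1 p1 W1 V2 p2 W2 \<le> 1/2 * gw_cost q V1 W1 V2 W2 C"
proof -
  have "bdd_below (gw_cost q V1 W1 V2 W2 ` couplings V1 p1 V2 p2)"
    unfolding gw_cost_def bdd_below_def by (rule exI[of _ 0]) auto
  then have "Inf (gw_cost q V1 W1 V2 W2 ` couplings V1 p1 V2 p2) \<le> gw_cost q V1 W1 V2 W2 C"
    using assms by (intro cInf_lower) auto
  then show ?thesis unfolding gw_dist_def gw_cost_def[abs_def] by simp
qed

definition diagonal_coupling :: "'a set \<Rightarrow> ('a \<Rightarrow> real) \<Rightarrow> 'a \<Rightarrow> 'a \<Rightarrow> real" where
  "diagonal_coupling V p i j = (if i \<in> V \<and> j = i then p i else 0)"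

lemma diagonal_coupling_in_couplings:
  assumes "finite V" "\<forall>v\<in>V. 0 \<le> p v"
  shows "diagonal_coupling V p \<in> couplings V p V p"
  using assms unfolding couplings_def diagonal_coupling_def by auto

lemma gw_cost_diagonal_coupling_le:
  assumes V: "finite V" and p: "\<forall>v\<in>V. 0 \<le> p v" "sum p V \<le> 1" and q: "0 < q" and "0 \<le> M"
    and W: "\<forall>i\<in>V. \<forall>k\<in>V. \<bar>W1 i k - W2 i k\<bar> \<le> M"
  shows "gw_cost q V W1 V W2 (diagonal_coupling V p) \<le> M"
proof -
  let ?D = "diagonal_coupling V p"
  have D_nonneg: "0 \<le> ?D i j" for i j using p by (simp add: diagonal_coupling_def)
  have D_sum: "(\<Sum>i\<in>V. \<Sum>j\<in>V. ?D i j) \<le> 1"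
    using V p by (simp add: diagonal_coupling_def if_distrib sum.delta cong: if_cong)
  have term_le: "\<bar>W1 i k - W2 j l\<bar> powr q * ?D i j * ?D k l \<le> M powr q * ?D i j * ?D k l"
    if "i \<in> V" "k \<in> V" for i j k l
  proof (cases "j = i \<and> l = k")
    case True
    then show ?thesis using W that D_nonneg q
      by (intro mult_right_mono powr_mono2) auto
  qed (auto simp: diagonal_coupling_def)
  have "(\<Sum>i\<in>V. \<Sum>j\<in>V. \<Sum>k\<in>V. \<Sum>l\<in>V. \<bar>W1 i k - W2 j l\<bar> powr q * ?D i j * ?D k l)
        \<le> (\<Sum>i\<in>V. \<Sum>j\<in>V. \<Sum>k\<in>V. \<Sum>l\<in>V. M powr q * ?D i j * ?D k l)"
    by (intro sum_mono term_le)
  also have "\<dots> = M powr q * (\<Sum>i\<in>V. \<Sum>j\<in>V. ?D i j) * (\<Sum>k\<in>V. \<Sum>l\<in>V. ?D k l)"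
    by (simp add: sum_distrib_left sum_distrib_right mult_ac)
  also have "\<dots> \<le> M powr q"
    using D_sum D_nonneg by (simp add: mult.assoc mult_left_le mult_le_one sum_nonneg)
  finally have "gw_cost q V W1 V W2 ?D \<le> (M powr q) powr (1/q)"
    unfolding gw_cost_def using q D_nonneg
    by (intro powr_mono2) (auto intro!: sum_nonneg mult_nonneg_nonneg)
  also have "\<dots> = M" using \<open>0 \<le> M\<close> q by (simp add: powr_powr)
  finally show ?thesis .
qed

lemma abs_le_sum_powr:
  fixes h :: "'a \<Rightarrow> real"
  assumes "finite V" "v \<in> V" "0 < q"
  shows "\<bar>h v\<bar> \<le> (\<Sum>w\<in>V. \<bar>h w\<bar> powr q) powr (1/q)"
proof -
  have "\<bar>h v\<bar> = (\<bar>h v\<bar> powr q) powr (1/q)" using \<open>0 < q\<close> by (simp add: powr_powr)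
  also have "\<dots> \<le> (\<Sum>w\<in>V. \<bar>h w\<bar> powr q) powr (1/q)"
    using assms by (intro powr_mono2 member_le_sum) auto
  finally show ?thesis .
qed

lemma card_powr_mult_Lq_norm_uniform:
  assumes "finite V" "0 < q"
  shows "real (card V) powr (1/q) * Lq_norm q V (\<lambda>_. 1 / real (card V)) h
           = (\<Sum>v\<in>V. \<bar>h v\<bar> powr q) powr (1/q)"
proof (cases "V = {}")
  case False
  then have "card V > 0" using assms by auto
  have "real (card V) powr (1/q) * Lq_norm q V (\<lambda>_. 1 / real (card V)) h
          = (real (card V) * ((\<Sum>v\<in>V. \<bar>h v\<bar> powr q) / real (card V))) powr (1/q)"
    unfolding Lq_norm_def by (simp add: powr_mult sum_nonneg sum_divide_distrib)
  also have "\<dots> = (\<Sum>v\<in>V. \<bar>h v\<bar> powr q) powr (1/q)" using \<open>card V > 0\<close> by simp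
  finally show ?thesis .
qed (simp add: Lq_norm_def)

theorem mainTheorem2:
  fixes \<C> :: "'a::euclidean_space set set" and f g :: "'a \<Rightarrow> real" and q :: real
  assumes "simplicial_complex \<C>"
    and "connected (cplx_space \<C>)"
    and "1 \<le> q"
    and "piecewise_linear_on \<C> f"
    and "piecewise_linear_on \<C> g"
  shows "gw_dist q
           (cplx_vertices \<C>) (\<lambda>_. 1 / real (card (cplx_vertices \<C>))) (merge_lca (cplx_space \<C>) f)
           (cplx_vertices \<C>) (\<lambda>_. 1 / real (card (cplx_vertices \<C>))) (merge_lca (cplx_space \<C>) g)
         \<le> 1/2 * real (card (cplx_vertices \<C>)) powr (1/q)
               * Lq_norm q (cplx_vertices \<C>) (\<lambda>_. 1 / real (card (cplx_vertices \<C>))) (\<lambda>v. f v - g v)"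
proof -
  define V where "V = cplx_vertices \<C>"
  define X where "X = cplx_space \<C>"
  define p where "p = (\<lambda>_::'a. 1 / real (card V))"
  define M where "M = (\<Sum>v\<in>V. \<bar>f v - g v\<bar> powr q) powr (1/q)"
  have V: "finite V" and q: "0 < q" using finite_cplx_vertices assms(1,3) by (auto simp: V_def)
  have "\<forall>v\<in>V. \<bar>f v - g v\<bar> \<le> M" unfolding M_def using abs_le_sum_powr[OF V _ q, of _ "\<lambda>v. f v - g v"] by blast
  then have "\<forall>x\<in>X. \<bar>f x - g x\<bar> \<le> M"
    using piecewise_linear_abs_le_from_vertices[OF assms(1) piecewise_linear_on_diff[OF assms(4,5)]]
    by (simp add: V_def X_def)
  moreover have "bdd_above (f ` X)" "bdd_above (g ` X)"
    using piecewise_linear_bounded[OF assms(1)] assms(4,5) by (simp_all add: X_def bounded_imp_bdd_above)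
  ultimately have "\<forall>v\<in>V. \<forall>w\<in>V. \<bar>merge_lca X f v w - merge_lca X g v w\<bar> \<le> M"
    using assms(2) cplx_vertices_subset_space[of \<C>]
    by (auto simp: X_def V_def intro!: abs_merge_lca_diff_le)
  then have "gw_cost q V (merge_lca X f) V (merge_lca X g) (diagonal_coupling V p) \<le> M"
    using V q by (intro gw_cost_diagonal_coupling_le) (auto simp: p_def M_def)
  moreover have "diagonal_coupling V p \<in> couplings V p V p"
    using V by (intro diagonal_coupling_in_couplings) (simp_all add: p_def)
  then have "gw_dist q V p (merge_lca X f) V p (merge_lca X g)
               \<le> 1/2 * gw_cost q V (merge_lca X f) V (merge_lca X g) (diagonal_coupling V p)"
    by (rule gw_dist_le_gw_cost)
  ultimately have "gw_dist q V p (merge_lca X f) V p (merge_lca X g) \<le> 1/2 * M" by linarith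
  then show ?thesis
    using card_powr_mult_Lq_norm_uniform[OF V q] by (simp add: V_def X_def p_def M_def)
qed

end
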